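(* Let $(G_n)$ be a sequence of graphs satisfying conditions (1')–(3') below. Then for all sufficiently large $n$, every subset $U\subseteq V$ with $1\le|U|\le\frac{2\overline\lambda^2n}{d^2}$ satisfies $$|N(U)|>\frac{(d-2\overline\lambda)^2}{5\overline\lambda^2}|U|.$$
   Context: $G_n$ has vertex set $V$, $|V|=n$, average degree $d$, minimum degree $\delta$, maximum degree $\Delta$. For $U,W\subseteq V$, $e(U,W)$ is the number of ordered pairs $(u,w)\in U\times W$ with $u$ adjacent to $w$; $N(U)$ is the set of vertices not in $U$ having a neighbor in $U$. A number $\overline\lambda=\overline\lambda(n)>0$ controls the edge distribution of $G_n$ if for all $U,W\subseteq V$: $\left|e(U,W)-\frac{d}{n}|U||W|\right|\le\overline\lambda\sqrt{|U||W|}$. Conditions: there is such $\overline\lambda$ with (1') $\Delta-\delta\le\overline\lambda$; (2') $\frac{d}{\overline\lambda}/\log^2n\to\infty$; (3') $\log d\cdot\log\frac{d}{\overline\lambda}/\log n\to\infty$. *)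

theory Defs
  imports Complex_Main
begin

definition simple_graph_on :: "nat \<Rightarrow> (nat \<Rightarrow> nat \<Rightarrow> bool) \<Rightarrow> bool" where
  "simple_graph_on n A \<longleftrightarrow>
     (\<forall>u<n. \<forall>w<n. A u w \<longleftrightarrow> A w u) \<and> (\<forall>u<n. \<not> A u u)"

definition deg :: "nat \<Rightarrow> (nat \<Rightarrow> nat \<Rightarrow> bool) \<Rightarrow> nat \<Rightarrow> nat" where
  "deg n A v = card {w. w < n \<and> A v w}"

definition avg_deg :: "nat \<Rightarrow> (nat \<Rightarrow> nat \<Rightarrow> bool) \<Rightarrow> real" where
  "avg_deg n A = (\<Sum>v<n. real (deg n A v)) / real n"

definition min_deg :: "nat \<Rightarrow> (nat \<Rightarrow> nat \<Rightarrow> bool) \<Rightarrow> nat" where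
  "min_deg n A = Min (deg n A ` {..<n})"

definition max_deg :: "nat \<Rightarrow> (nat \<Rightarrow> nat \<Rightarrow> bool) \<Rightarrow> nat" where
  "max_deg n A = Max (deg n A ` {..<n})"

definition e_pairs :: "(nat \<Rightarrow> nat \<Rightarrow> bool) \<Rightarrow> nat set \<Rightarrow> nat set \<Rightarrow> nat" where
  "e_pairs A U W = card {(u, w). u \<in> U \<and> w \<in> W \<and> A u w}"

definition nbhd :: "nat \<Rightarrow> (nat \<Rightarrow> nat \<Rightarrow> bool) \<Rightarrow> nat set \<Rightarrow> nat set" where
  "nbhd n A U = {v. v < n \<and> v \<notin> U \<and> (\<exists>u\<in>U. A u v)}"

definition controls_edge_distribution ::
  "nat \<Rightarrow> (nat \<Rightarrow> nat \<Rightarrow> bool) \<Rightarrow> real \<Rightarrow> bool" where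
  "controls_edge_distribution n A lam \<longleftrightarrow>
     (\<forall>U W. U \<subseteq> {..<n} \<longrightarrow> W \<subseteq> {..<n} \<longrightarrow>
        \<bar>real (e_pairs A U W) - avg_deg n A / real n * real (card U) * real (card W)\<bar>
          \<le> lam * sqrt (real (card U) * real (card W)))"

end

theory Submission
  imports Defs
begin

text \<open>Write \<open>N = N(U)\<close>, \<open>r = d/\<lambda>\<close> and \<open>t = |U \<union> N|/|U|\<close>. The edges leaving \<open>U\<close> all land in
  \<open>U \<union> N\<close>, so \<open>e(U, U \<union> N) \<ge> \<delta>|U| \<ge> (d - \<lambda>)|U|\<close>, while edge control bounds the same
  quantity by \<open>(d/n)|U||U \<union> N| + \<lambda>|U|\<surd>t\<close>. For \<open>|U| \<le> 2\<lambda>\<^sup>2n/d\<^sup>2\<close> this gives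
  \<open>r - 1 \<le> 2t/r + \<surd>t\<close>, which forces \<open>t - 1 > (r - 2)\<^sup>2/5\<close> once \<open>r \<ge> 30\<close>; condition (2')
  guarantees \<open>r \<ge> 30\<close> for large \<open>n\<close>.\<close>

lemma quadratic_sqrt_inequality_forces_large:
  fixes r t :: real
  assumes r: "r \<ge> 30" and t: "t \<ge> 0" and ineq: "r - 1 \<le> 2 * t / r + sqrt t"
  shows "t > 1 + (r - 2)\<^sup>2 / 5"
proof (rule ccontr)
  assume "\<not> ?thesis"
  moreover have "(r - 2)\<^sup>2 \<le> r\<^sup>2" using r by (intro power_mono) auto
  ultimately have t_le: "t \<le> 1 + r\<^sup>2 / 5" by linarith
  hence "t \<le> 1 + r * r / 5" by (simp add: power2_eq_square)
  moreover have "0 \<le> r * r" using r by simp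
  ultimately have "t \<le> 1 + r + r * r / 4" using r by linarith
  hence "t \<le> (1 + r / 2)\<^sup>2" by (simp add: power2_eq_square field_simps)
  hence "sqrt t \<le> sqrt ((1 + r / 2)\<^sup>2)" by (rule real_sqrt_le_mono)
  hence sqrt_le: "sqrt t \<le> 1 + r / 2" using r by simp
  have "2 * t / r \<le> 2 * (1 + r\<^sup>2 / 5) / r" using t_le r by (simp add: divide_right_mono)
  also have "\<dots> = 2 / r + 2 * r / 5" using r by (simp add: field_simps power2_eq_square)
  also have "2 / r \<le> 1 / 2" using r by (simp add: field_simps)
  finally have "2 * t / r \<le> 1 / 2 + 2 * r / 5" by simp
  with sqrt_le ineq r show False by linarith
qed

lemma e_pairs_closed_nbhd:
  assumes "U \<subseteq> {..<n}"
  shows "e_pairs A U (U \<union> nbhd n A U) = (\<Sum>u\<in>U. deg n A u)"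
proof -
  have "{(u, w). u \<in> U \<and> w \<in> U \<union> nbhd n A U \<and> A u w} = Sigma U (\<lambda>u. {w. w < n \<and> A u w})"
    using assms unfolding nbhd_def by auto
  moreover have "finite U" using assms finite_subset by blast
  ultimately show ?thesis unfolding e_pairs_def deg_def by (simp add: card_SigmaI)
qed

lemma min_deg_le_deg: "v < n \<Longrightarrow> min_deg n A \<le> deg n A v"
  unfolding min_deg_def by (rule Min_le) auto

lemma avg_deg_le_max_deg:
  assumes "n > 0"
  shows "avg_deg n A \<le> real (max_deg n A)"
proof -
  have "\<And>v. v < n \<Longrightarrow> deg n A v \<le> max_deg n A"
    unfolding max_deg_def by (rule Max_ge) auto
  hence "(\<Sum>v<n. real (deg n A v)) \<le> (\<Sum>v<n. real (max_deg n A))"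
    by (intro sum_mono) auto
  thus ?thesis using assms unfolding avg_deg_def by (simp add: divide_le_eq mult.commute)
qed

lemma e_pairs_closed_nbhd_lower:
  assumes U: "U \<subseteq> {..<n}" and n: "n > 0"
    and spread: "real (max_deg n A) - real (min_deg n A) \<le> lam"
  shows "(avg_deg n A - lam) * real (card U) \<le> real (e_pairs A U (U \<union> nbhd n A U))"
proof -
  have "avg_deg n A - lam \<le> real (min_deg n A)"
    using avg_deg_le_max_deg[OF n, of A] spread by linarith
  hence "(\<Sum>u\<in>U. avg_deg n A - lam) \<le> (\<Sum>u\<in>U. real (deg n A u))"
    using U min_deg_le_deg by (intro sum_mono) (meson lessThan_iff of_nat_le_iff order_trans subsetD)
  thus ?thesis using e_pairs_closed_nbhd[OF U, of A] by (simp add: mult.commute)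
qed

lemma closed_nbhd_ratio_inequality:
  fixes n :: nat and A :: "nat \<Rightarrow> nat \<Rightarrow> bool" and U :: "nat set" and lam :: real
  defines "d \<equiv> avg_deg n A"
    and "t \<equiv> real (card (U \<union> nbhd n A U)) / real (card U)"
  assumes control: "controls_edge_distribution n A lam"
    and spread: "real (max_deg n A) - real (min_deg n A) \<le> lam"
    and lam: "lam > 0" and d: "d > 0" and n: "n > 0"
    and U: "U \<subseteq> {..<n}" "U \<noteq> {}" and small: "real (card U) \<le> 2 * lam\<^sup>2 * real n / d\<^sup>2"
  shows "d / lam - 1 \<le> 2 * t / (d / lam) + sqrt t"
proof -
  define W where "W = U \<union> nbhd n A U"
  define u where "u = real (card U)"
  have W: "W \<subseteq> {..<n}" using U unfolding W_def nbhd_def by auto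
  have "finite U" using U(1) finite_subset by blast
  hence u: "u > 0" using U(2) unfolding u_def by (simp add: card_gt_0_iff)
  have t: "t \<ge> 0" unfolding t_def by simp
  have card_W: "real (card W) = t * u" using u unfolding t_def W_def u_def by simp
  have "\<bar>real (e_pairs A U W) - d / real n * u * real (card W)\<bar> \<le> lam * sqrt (u * real (card W))"
    using control U(1) W unfolding controls_edge_distribution_def d_def u_def by blast
  hence "real (e_pairs A U W) \<le> d / real n * u * real (card W) + lam * sqrt (u * real (card W))"
    by linarith
  moreover have "(d - lam) * u \<le> real (e_pairs A U W)"
    using e_pairs_closed_nbhd_lower[OF U(1) n spread] unfolding d_def u_def W_def .
  moreover have "sqrt (u * real (card W)) = u * sqrt t"
    using u card_W by (simp add: real_sqrt_mult power2_eq_square[symmetric])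
  moreover have "d / real n * u \<le> 2 * lam\<^sup>2 / d"
  proof -
    have "d / real n * u \<le> d / real n * (2 * lam\<^sup>2 * real n / d\<^sup>2)"
      using small d unfolding u_def by (intro mult_left_mono) auto
    also have "\<dots> = 2 * lam\<^sup>2 / d" using d n by (simp add: field_simps power2_eq_square)
    finally show ?thesis .
  qed
  hence "d / real n * u * (t * u) \<le> 2 * lam\<^sup>2 / d * (t * u)"
    using t u by (intro mult_right_mono) auto
  hence "d / real n * u * real (card W) \<le> 2 * lam\<^sup>2 / d * t * u"
    using card_W by (simp add: mult.assoc)
  ultimately have "(d - lam) * u \<le> (2 * lam\<^sup>2 / d * t + lam * sqrt t) * u"
    by (simp add: algebra_simps)
  hence "d - lam \<le> 2 * lam\<^sup>2 / d * t + lam * sqrt t" using u by simp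
  hence "(d - lam) / lam \<le> (2 * lam\<^sup>2 / d * t + lam * sqrt t) / lam"
    using lam by (simp add: divide_right_mono)
  moreover have "(d - lam) / lam = d / lam - 1" using lam by (simp add: field_simps)
  moreover have "(2 * lam\<^sup>2 / d * t + lam * sqrt t) / lam = 2 * t / (d / lam) + sqrt t"
    using lam d by (simp add: field_simps power2_eq_square)
  ultimately show ?thesis by simp
qed

lemma nbhd_expansion:
  fixes n :: nat and A :: "nat \<Rightarrow> nat \<Rightarrow> bool" and lam :: real
  defines "d \<equiv> avg_deg n A"
  assumes control: "controls_edge_distribution n A lam"
    and spread: "real (max_deg n A) - real (min_deg n A) \<le> lam"
    and lam: "lam > 0" and ratio: "d / lam \<ge> 30" and n: "n > 0"
    and U: "U \<subseteq> {..<n}" "1 \<le> card U" and small: "real (card U) \<le> 2 * lam\<^sup>2 * real n / d\<^sup>2"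
  shows "real (card (nbhd n A U)) > (d - 2 * lam)\<^sup>2 / (5 * lam\<^sup>2) * real (card U)"
proof -
  define u where "u = real (card U)"
  define t where "t = real (card (U \<union> nbhd n A U)) / u"
  have u: "u \<ge> 1" using U(2) unfolding u_def by simp
  have "d > 0" using ratio lam by (simp add: le_divide_eq)
  moreover have "U \<noteq> {}" using U(2) by auto
  ultimately have "d / lam - 1 \<le> 2 * t / (d / lam) + sqrt t"
    using closed_nbhd_ratio_inequality[OF control spread lam _ n U(1) _ small[unfolded d_def]]
    unfolding d_def t_def u_def by simp
  moreover have "t \<ge> 0" unfolding t_def u_def by simp
  ultimately have "t > 1 + (d / lam - 2)\<^sup>2 / 5"
    using quadratic_sqrt_inequality_forces_large[OF ratio] by blast
  hence "(d / lam - 2)\<^sup>2 / 5 < t - 1" by simp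
  moreover have "(d - 2 * lam)\<^sup>2 / (5 * lam\<^sup>2) = (d / lam - 2)\<^sup>2 / 5"
    using lam by (simp add: field_simps power2_eq_square)
  ultimately have "(d - 2 * lam)\<^sup>2 / (5 * lam\<^sup>2) < t - 1" by simp
  hence "(d - 2 * lam)\<^sup>2 / (5 * lam\<^sup>2) * u < (t - 1) * u"
    using u by (intro mult_strict_right_mono) auto
  also have "(t - 1) * u = real (card (nbhd n A U))"
  proof -
    have "finite U" "finite (nbhd n A U)" "U \<inter> nbhd n A U = {}"
      using U(1) finite_subset unfolding nbhd_def by auto
    hence "real (card (U \<union> nbhd n A U)) = u + real (card (nbhd n A U))"
      unfolding u_def by (simp add: card_Un_disjoint)
    moreover have "t * u = real (card (U \<union> nbhd n A U))" using u unfolding t_def by simp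
    ultimately show ?thesis by (simp add: algebra_simps)
  qed
  finally show ?thesis unfolding u_def .
qed

lemma eventually_ge_of_div_ln_sq_at_top:
  fixes f :: "nat \<Rightarrow> real"
  assumes "filterlim (\<lambda>n. f n / (ln (real n))\<^sup>2) at_top sequentially" and "c \<ge> 0"
  shows "\<forall>\<^sub>F n in sequentially. f n \<ge> c"
proof -
  have "\<forall>\<^sub>F n in sequentially. f n / (ln (real n))\<^sup>2 \<ge> c"
    using assms(1) by (simp add: filterlim_at_top)
  moreover have "\<forall>\<^sub>F n in sequentially. n \<ge> (3::nat)" by (rule eventually_ge_at_top)
  ultimately show ?thesis
  proof eventually_elim
    case (elim n)
    have "1 \<le> ln (3::real)" using ln_ge_iff[of 3 1] exp_le by simp
    also have "\<dots> \<le> ln (real n)" using elim(2) by simp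
    finally have ln_sq: "1 \<le> (ln (real n))\<^sup>2" by (simp add: one_le_power)
    hence "(ln (real n))\<^sup>2 \<noteq> 0" by linarith
    hence "f n = f n / (ln (real n))\<^sup>2 * (ln (real n))\<^sup>2" by simp
    also have "\<dots> \<ge> c * 1" using elim(1) ln_sq assms(2) by (intro mult_mono) auto
    finally show ?case by simp
  qed
qed

theorem corollary4:
  fixes G :: "nat \<Rightarrow> nat \<Rightarrow> nat \<Rightarrow> bool" and lam :: "nat \<Rightarrow> real"
  assumes graphs: "\<And>n. simple_graph_on n (G n)"
    and lam_pos: "\<And>n. lam n > 0"
    and control: "\<And>n. controls_edge_distribution n (G n) (lam n)"
    and cond1: "\<And>n. real (max_deg n (G n)) - real (min_deg n (G n)) \<le> lam n"
    and cond2: "filterlim (\<lambda>n. (avg_deg n (G n) / lam n) / (ln (real n))\<^sup>2) at_top sequentially"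
    and cond3: "filterlim (\<lambda>n. ln (avg_deg n (G n)) * ln (avg_deg n (G n) / lam n) / ln (real n))
                  at_top sequentially"
  shows "\<forall>\<^sub>F n in sequentially. \<forall>U. U \<subseteq> {..<n} \<longrightarrow> 1 \<le> card U \<longrightarrow>
           real (card U) \<le> 2 * (lam n)\<^sup>2 * real n / (avg_deg n (G n))\<^sup>2 \<longrightarrow>
           real (card (nbhd n (G n) U)) >
             (avg_deg n (G n) - 2 * lam n)\<^sup>2 / (5 * (lam n)\<^sup>2) * real (card U)"
proof -
  have "\<forall>\<^sub>F n in sequentially. avg_deg n (G n) / lam n \<ge> 30"
    using eventually_ge_of_div_ln_sq_at_top[OF cond2] by simp
  moreover have "\<forall>\<^sub>F n in sequentially. n > 0" by (rule eventually_gt_at_top)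
  ultimately show ?thesis
    by eventually_elim (use nbhd_expansion[OF control cond1 lam_pos] in blast)
qed

end
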